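(* Let $f:\mathbb{R}^n_{>0} \to \mathbb{R}^n_{>0}$ be order-preserving, homogeneous, multiplicatively convex, and analytic. Then $f$ is type K order-preserving if and only if for every $i \in [n]$ there is an arc from $i$ to itself in $\mathcal{G}(f)$, i.e. $\lim_{t\to\infty} f(\exp(t e_i))_i = \infty$ for every $i\in[n]$.
   Context: $[n] = \{1,\dots,n\}$; $e_i$ are the standard basis vectors; $\log$ and $\exp$ act entrywise. The order on $\mathbb{R}^n$ is entrywise. $f$ is order-preserving if $x \le y \Rightarrow f(x)\le f(y)$; homogeneous if $f(tx) = t f(x)$ for $t > 0$; analytic if each coordinate is real analytic; multiplicatively convex if $\log\circ f\circ\exp$ has convex coordinate functions on $\mathbb{R}^n$. $f$ is type K order-preserving if for any $x \le y$ there is $\epsilon>0$ with $f(y) - f(x) \ge \epsilon(y-x)$. The directed graph $\mathcal{G}(f)$ has vertices $[n]$ and an arc from $i$ to $j$ iff $\lim_{t\to\infty} f(\exp(t e_j))_i = \infty$. *)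

theory Defs
  imports "HOL-Analysis.Analysis"
begin

definition pos_cone :: "(real ^ 'n) set" where
  "pos_cone = {x. \<forall>i. 0 < x $ i}"

definition vle :: "real ^ 'n \<Rightarrow> real ^ 'n \<Rightarrow> bool" where
  "vle x y \<longleftrightarrow> (\<forall>i. x $ i \<le> y $ i)"

definition maps_pos_cone :: "(real ^ 'n \<Rightarrow> real ^ 'n) \<Rightarrow> bool" where
  "maps_pos_cone f \<longleftrightarrow> (\<forall>x \<in> pos_cone. f x \<in> pos_cone)"

definition order_preserving :: "(real ^ 'n \<Rightarrow> real ^ 'n) \<Rightarrow> bool" where
  "order_preserving f \<longleftrightarrow>
     (\<forall>x \<in> pos_cone. \<forall>y \<in> pos_cone. vle x y \<longrightarrow> vle (f x) (f y))"

definition homogeneous :: "(real ^ 'n \<Rightarrow> real ^ 'n) \<Rightarrow> bool" where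
  "homogeneous f \<longleftrightarrow> (\<forall>x \<in> pos_cone. \<forall>t > 0. f (t *\<^sub>R x) = t *\<^sub>R f x)"

definition vexp :: "real ^ 'n \<Rightarrow> real ^ 'n" where
  "vexp y = (\<chi> i. exp (y $ i))"

definition mult_convex :: "(real ^ 'n \<Rightarrow> real ^ 'n) \<Rightarrow> bool" where
  "mult_convex f \<longleftrightarrow> (\<forall>i. convex_on UNIV (\<lambda>y. ln (f (vexp y) $ i)))"

text \<open>Real analyticity of a real-valued function of n variables on an open set S:
  locally the sum of an (absolutely/unconditionally) convergent multivariate power series.\<close>
definition real_analytic_on :: "(real ^ 'n \<Rightarrow> real) \<Rightarrow> (real ^ 'n) set \<Rightarrow> bool" where
  "real_analytic_on g S \<longleftrightarrow>
     (\<forall>x \<in> S. \<exists>r > 0. \<exists>c :: ('n \<Rightarrow> nat) \<Rightarrow> real.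
        \<forall>y \<in> ball x r. ((\<lambda>\<alpha>. c \<alpha> * (\<Prod>i\<in>UNIV. (y $ i - x $ i) ^ \<alpha> i)) has_sum g y) UNIV)"

definition analytic_map :: "(real ^ 'n \<Rightarrow> real ^ 'n) \<Rightarrow> bool" where
  "analytic_map f \<longleftrightarrow> (\<forall>i. real_analytic_on (\<lambda>x. f x $ i) pos_cone)"

definition typeK_order_preserving :: "(real ^ 'n \<Rightarrow> real ^ 'n) \<Rightarrow> bool" where
  "typeK_order_preserving f \<longleftrightarrow>
     (\<forall>x \<in> pos_cone. \<forall>y \<in> pos_cone. vle x y \<longrightarrow>
        (\<exists>\<epsilon> > 0. vle (\<epsilon> *\<^sub>R (y - x)) (f y - f x)))"

definition graph_arc :: "(real ^ 'n \<Rightarrow> real ^ 'n) \<Rightarrow> 'n \<Rightarrow> 'n \<Rightarrow> bool" where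
  "graph_arc f i j \<longleftrightarrow>
     filterlim (\<lambda>t. f (vexp (t *\<^sub>R axis j 1)) $ i) at_top at_top"

end

theory Submission
  imports Defs "HOL-Complex_Analysis.Cauchy_Integral_Formula"
begin

text \<open>If f is type K, then s \<mapsto> ln f(exp(s e_i))_i is convex (multiplicative convexity) and
  strictly increases somewhere, hence tends to \<infinity>: this is the loop at i.
  Conversely, a loop at i, homogeneity and monotonicity make t \<mapsto> f(x + t e_i)_i unbounded
  for every x > 0. This function is monotone and analytic; were it constant on an interval, the right
  end of the maximal flat stretch would be a point where its power series is constant on one side
  but not on the other, which the identity theorem for power series forbids. So every coordinate of f
  increases strictly with the corresponding coordinate of its argument, and since there are finitely
  many coordinates the least difference quotient is a uniform type K constant.\<close>

lemma convex_on_filterlim_at_top: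
  fixes H :: "real \<Rightarrow> real"
  assumes cvx: "convex_on UNIV H" and "a < b" and "H a < H b"
  shows "filterlim H at_top at_top"
proof -
  define m where "m = (H b - H a) / (b - a)"
  have m: "m > 0" using assms by (simp add: m_def)
  have "H a + m * (s - a) \<le> H s" if "s > b" for s
  proof -
    have "m = (H a - H b) / (a - b)"
      unfolding m_def by (metis minus_diff_eq minus_divide_divide)
    hence "m \<le> (H a - H s) / (a - s)"
      using convex_on_slope_le(1)[OF cvx _ _ \<open>a < b\<close> that] by simp
    thus ?thesis using that \<open>a < b\<close> by (simp add: field_simps)
  qed
  hence "eventually (\<lambda>s. H a + m * (s - a) \<le> H s) at_top"
    by (auto simp: eventually_at_top_dense)
  moreover have "filterlim (\<lambda>s. H a + m * (s - a)) at_top at_top"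
    using filterlim_tendsto_add_at_top[OF tendsto_const
        filterlim_tendsto_pos_mult_at_top[OF tendsto_const m filterlim_ident], of "H a - m * a"]
    by (simp add: algebra_simps)
  ultimately show ?thesis by (rule filterlim_at_top_mono[rotated])
qed

lemma powser_eq_const_if_eq_const_at_left:
  fixes c :: "nat \<Rightarrow> real"
  assumes "\<rho> > 0" and sums: "\<And>r. \<bar>r\<bar> < \<rho> \<Longrightarrow> (\<lambda>k. c k * r ^ k) sums F r"
    and "d > 0" and left: "\<And>r. - d < r \<Longrightarrow> r < 0 \<Longrightarrow> F r = C"
    and "\<bar>r\<bar> < \<rho>"
  shows "F r = C"
proof -
  have "(F \<longlongrightarrow> c 0) (at_left 0)"
    using powser_limit_0[of \<rho> c F] assms(1) sums by (simp add: filterlim_at_split)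
  moreover have "eventually (\<lambda>r. F r = C) (at_left 0)"
    using eventually_at_left_real[of "- d" 0] \<open>d > 0\<close> by (auto elim!: eventually_mono intro: left)
  ultimately have c0: "c 0 = C"
    using tendsto_unique[OF trivial_limit_at_left_real] tendsto_eventually by (metis tendsto_cong)
  show ?thesis
  proof (cases "\<exists>m>0. c m \<noteq> 0")
    case True
    then obtain m where "m > 0" "c m \<noteq> 0" by blast
    have "(\<lambda>k. (c(0 := 0)) k * (r - 0) ^ k) sums (F r - C)" if "norm (r - 0) < \<rho>" for r
    proof -
      have "(\<lambda>k. (c(0 := 0)) k * (r - 0) ^ k) = (\<lambda>k. c k * r ^ k - (if k = 0 then C else 0))"
        using c0 by (auto simp: fun_eq_iff)
      thus ?thesis using sums_diff[OF sums[of r] sums_single[of 0 "\<lambda>_. C"]] that by simp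
    qed
    then obtain s where "s > 0" and s: "\<And>z. z \<in> cball 0 s - {0} \<Longrightarrow> F z - C \<noteq> 0"
      using powser_0_nonzero[of \<rho> 0 "c(0 := 0)" "\<lambda>r. F r - C" m] assms(1) sums[of 0] c0
        \<open>m > 0\<close> \<open>c m \<noteq> 0\<close> by auto
    define z where "z = - min s d / 2"
    have "F z = C" using left \<open>s > 0\<close> \<open>d > 0\<close> by (simp add: z_def)
    moreover have "z \<in> cball 0 s - {0}" using \<open>s > 0\<close> \<open>d > 0\<close> by (auto simp: z_def)
    ultimately show ?thesis using s by auto
  next
    case False
    hence "c k = 0" if "k > 0" for k using that by blast
    hence "c k * r ^ k = (if k = 0 then C else 0)" for k
      using c0 by (cases "k = 0") auto
    hence "(\<lambda>k. c k * r ^ k) = (\<lambda>k. if k = 0 then C else 0)" by simp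
    hence "(\<lambda>k. if k = 0 then C else 0) sums F r" using sums[OF \<open>\<bar>r\<bar> < \<rho>\<close>] by simp
    thus ?thesis using sums_single[of 0 "\<lambda>_. C"] sums_unique2 by blast
  qed
qed

lemma strict_mono_on_if_powser_expansions:
  fixes G :: "real \<Rightarrow> real"
  assumes mono: "mono_on {a..} G" and lim: "filterlim G at_top at_top"
    and expansions: "\<And>t. t > a \<Longrightarrow> \<exists>\<rho>>0. \<exists>c. \<forall>r. \<bar>r\<bar> < \<rho> \<longrightarrow> (\<lambda>k. c k * r ^ k) sums G (t + r)"
  shows "strict_mono_on {a..} G"
proof (rule strict_mono_onI)
  fix s t assume "s \<in> {a..}" "t \<in> {a..}" "s < t"
  show "G s < G t"
  proof (rule ccontr)
    assume "\<not> G s < G t"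
    with mono_onD[OF mono \<open>s \<in> {a..}\<close> \<open>t \<in> {a..}\<close>] \<open>s < t\<close> have "G t = G s" by simp
    define S where "S = {u. s \<le> u \<and> G u \<le> G s}"
    have "eventually (\<lambda>u. G u > G s) at_top"
      using lim by (simp add: filterlim_at_top_dense)
    then obtain N where N: "\<And>u. u \<ge> N \<Longrightarrow> G u > G s"
      unfolding eventually_at_top_linorder by blast
    have bdd: "bdd_above S"
    proof (rule bdd_aboveI)
      fix u assume "u \<in> S"
      thus "u \<le> N" using N[of u] by (cases "N \<le> u") (auto simp: S_def)
    qed
    have "t \<in> S" using \<open>G t = G s\<close> \<open>s < t\<close> by (simp add: S_def)
    define u1 where "u1 = Sup S" \<comment> \<open>the right end of the flat stretch of G starting at s\<close>
    have "t \<le> u1" unfolding u1_def using cSup_upper[OF \<open>t \<in> S\<close> bdd] .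
    have flat: "G u = G s" if "s \<le> u" "u < u1" for u
    proof -
      obtain u' where "u' \<in> S" "u < u'"
        using \<open>u < u1\<close> less_cSup_iff[OF _ bdd] \<open>t \<in> S\<close> unfolding u1_def by blast
      hence "G u \<le> G s"
        using mono_onD[OF mono, of u u'] \<open>s \<in> {a..}\<close> \<open>s \<le> u\<close> by (auto simp: S_def)
      moreover have "G s \<le> G u" using mono_onD[OF mono] \<open>s \<in> {a..}\<close> \<open>s \<le> u\<close> by auto
      ultimately show ?thesis by simp
    qed
    obtain \<rho> c where "\<rho> > 0" and sums: "\<And>r. \<bar>r\<bar> < \<rho> \<Longrightarrow> (\<lambda>k. c k * r ^ k) sums G (u1 + r)"
      using expansions[of u1] \<open>s \<in> {a..}\<close> \<open>s < t\<close> \<open>t \<le> u1\<close> by auto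
    have left: "G (u1 + r) = G s" if "- (u1 - s) < r" "r < 0" for r
      using flat[of "u1 + r"] that by simp
    have "G (u1 + r) = G s" if "\<bar>r\<bar> < \<rho>" for r
      by (rule powser_eq_const_if_eq_const_at_left[of \<rho> c "\<lambda>r. G (u1 + r)" "u1 - s"])
        (use \<open>\<rho> > 0\<close> sums left \<open>s < t\<close> \<open>t \<le> u1\<close> that in auto)
    hence "u1 + \<rho> / 2 \<in> S"
      using \<open>\<rho> > 0\<close> \<open>s < t\<close> \<open>t \<le> u1\<close> by (simp add: S_def)
    from cSup_upper[OF this bdd] \<open>\<rho> > 0\<close> show False by (simp add: u1_def)
  qed
qed

lemma convex_on_line:
  fixes g :: "'a::real_vector \<Rightarrow> real"
  assumes "convex_on UNIV g"
  shows "convex_on UNIV (\<lambda>s. g (w + s *\<^sub>R v))"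
proof (rule convex_onI)
  fix t x y :: real assume "0 < t" "t < 1"
  have "w + ((1 - t) *\<^sub>R x + t *\<^sub>R y) *\<^sub>R v = (1 - t) *\<^sub>R (w + x *\<^sub>R v) + t *\<^sub>R (w + y *\<^sub>R v)"
    by (simp add: algebra_simps)
  thus "g (w + ((1 - t) *\<^sub>R x + t *\<^sub>R y) *\<^sub>R v) \<le> (1 - t) * g (w + x *\<^sub>R v) + t * g (w + y *\<^sub>R v)"
    using convex_onD[OF assms, of t] \<open>0 < t\<close> \<open>t < 1\<close> by simp
qed simp

lemma real_analytic_on_axis_powser:
  fixes g :: "real ^ 'n \<Rightarrow> real"
  assumes an: "real_analytic_on g S" and p: "p \<in> S"
  shows "\<exists>\<rho>>0. \<exists>a::nat \<Rightarrow> real. \<forall>r. \<bar>r\<bar> < \<rho> \<longrightarrow> (\<lambda>k. a k * r ^ k) sums g (p + r *\<^sub>R axis i 1)"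
proof -
  obtain \<rho> c where rho: "\<rho> > 0" and hs: "\<And>y. y \<in> ball p \<rho> \<Longrightarrow>
      ((\<lambda>\<alpha>. c \<alpha> * (\<Prod>j\<in>UNIV. (y $ j - p $ j) ^ \<alpha> j)) has_sum g y) UNIV"
    using an p unfolding real_analytic_on_def by blast
  \<comment> \<open>On the line through p in direction e_i only the multi-indices E k supported at i contribute.\<close>
  define E where "E = (\<lambda>k::nat. \<lambda>j::'n. if j = i then k else (0::nat))"
  have injE: "inj E" unfolding E_def inj_def by metis
  define a where "a = (\<lambda>k. c (E k))"
  have "(\<lambda>k. a k * r ^ k) sums g (p + r *\<^sub>R axis i 1)" if r: "\<bar>r\<bar> < \<rho>" for r
  proof -
    define y where "y = p + r *\<^sub>R axis i 1"
    have "y \<in> ball p \<rho>" using r by (simp add: y_def dist_norm)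
    note h = hs[OF this]
    define T where "T = (\<lambda>\<alpha>. c \<alpha> * (\<Prod>j\<in>UNIV. (y $ j - p $ j) ^ \<alpha> j))"
    have yp: "y $ j - p $ j = (if j = i then r else 0)" for j
      by (simp add: y_def axis_def)
    have T0: "T \<alpha> = 0" if "\<alpha> \<notin> range E" for \<alpha>
    proof -
      have "\<alpha> \<noteq> E (\<alpha> i)" using that by auto
      then obtain j where "\<alpha> j \<noteq> E (\<alpha> i) j" by auto
      hence j: "j \<noteq> i" "\<alpha> j \<noteq> 0" by (auto simp: E_def split: if_splits)
      have "(\<Prod>j\<in>UNIV. (y $ j - p $ j) ^ \<alpha> j) = 0"
        by (rule prod_zero) (use j in \<open>auto simp: yp intro!: bexI[of _ j]\<close>)
      thus ?thesis by (simp add: T_def)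
    qed
    have "(T has_sum g y) UNIV" using h by (simp add: T_def)
    hence "(T has_sum g y) (range E)"
      by (subst (asm) has_sum_cong_neutral[of "range E" UNIV T T]) (use T0 in auto)
    hence "((T \<circ> E) has_sum g y) UNIV" using has_sum_reindex[OF injE] by blast
    moreover have "(T \<circ> E) k = a k * r ^ k" for k
    proof -
      have "(\<Prod>j\<in>UNIV. (y $ j - p $ j) ^ E k j) = (\<Prod>j\<in>UNIV. if j = i then r ^ k else 1)"
        by (rule prod.cong) (auto simp: yp E_def)
      also have "\<dots> = r ^ k" by simp
      finally show ?thesis by (simp add: T_def a_def)
    qed
    ultimately have "((\<lambda>k. a k * r ^ k) has_sum g y) UNIV" by (simp add: comp_def)
    thus ?thesis using has_sum_imp_sums y_def by blast
  qed
  thus ?thesis using rho by blast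
qed

lemma vexp_in_pos_cone: "vexp y \<in> pos_cone"
  by (simp add: vexp_def pos_cone_def)

lemma pos_cone_add_axis: "x \<in> pos_cone \<Longrightarrow> t \<ge> 0 \<Longrightarrow> x + t *\<^sub>R axis i 1 \<in> pos_cone"
  by (simp add: pos_cone_def axis_def add_pos_nonneg)

lemma maps_pos_cone_component_pos: "maps_pos_cone f \<Longrightarrow> x \<in> pos_cone \<Longrightarrow> 0 < f x $ i"
  by (auto simp: maps_pos_cone_def pos_cone_def)

lemma filterlim_axis_line_if_graph_loop:
  assumes maps: "maps_pos_cone f" and op: "order_preserving f" and hom: "homogeneous f"
    and loop: "graph_arc f i i" and x: "x \<in> pos_cone"
  shows "filterlim (\<lambda>t. f (x + t *\<^sub>R axis i 1) $ i) at_top at_top"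
proof -
  define c where "c = Min (range (\<lambda>k. x $ k))"
  have "c > 0" using x by (simp add: c_def pos_cone_def)
  have c_le: "c \<le> x $ k" for k by (simp add: c_def)
  define s where "s = (\<lambda>t. ln (t / c))"
  have bound: "c * f (vexp (s t *\<^sub>R axis i 1)) $ i \<le> f (x + t *\<^sub>R axis i 1) $ i" if "t > 0" for t
  proof -
    have "vle (c *\<^sub>R vexp (s t *\<^sub>R axis i 1)) (x + t *\<^sub>R axis i 1)"
      using c_le \<open>c > 0\<close> \<open>t > 0\<close> x
      by (auto simp: vle_def vexp_def axis_def s_def pos_cone_def intro: less_imp_le)
    moreover have "c *\<^sub>R vexp (s t *\<^sub>R axis i 1) \<in> pos_cone"
      using \<open>c > 0\<close> by (simp add: vexp_def pos_cone_def)
    ultimately have "vle (f (c *\<^sub>R vexp (s t *\<^sub>R axis i 1))) (f (x + t *\<^sub>R axis i 1))"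
      using op pos_cone_add_axis[OF x] \<open>t > 0\<close> unfolding order_preserving_def by simp
    moreover have "f (c *\<^sub>R vexp (s t *\<^sub>R axis i 1)) = c *\<^sub>R f (vexp (s t *\<^sub>R axis i 1))"
      using hom \<open>c > 0\<close> vexp_in_pos_cone unfolding homogeneous_def by blast
    ultimately show ?thesis by (simp add: vle_def)
  qed
  have "filterlim (\<lambda>t. inverse c * t) at_top at_top"
    using \<open>c > 0\<close> by (intro filterlim_tendsto_pos_mult_at_top[OF tendsto_const _ filterlim_ident]) simp
  hence "filterlim s at_top at_top"
    unfolding s_def using filterlim_compose[OF ln_at_top] by (simp add: divide_inverse mult.commute)
  hence "filterlim (\<lambda>t. f (vexp (s t *\<^sub>R axis i 1)) $ i) at_top at_top"
    using filterlim_compose[OF loop[unfolded graph_arc_def]] by blast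
  hence "filterlim (\<lambda>t. c * f (vexp (s t *\<^sub>R axis i 1)) $ i) at_top at_top"
    using filterlim_tendsto_pos_mult_at_top[OF tendsto_const \<open>c > 0\<close>] by blast
  moreover have "eventually (\<lambda>t. c * f (vexp (s t *\<^sub>R axis i 1)) $ i \<le> f (x + t *\<^sub>R axis i 1) $ i) at_top"
    using eventually_mono[OF eventually_gt_at_top[of 0] bound] .
  ultimately show ?thesis by (rule filterlim_at_top_mono)
qed

lemma graph_loop_if_typeK:
  assumes maps: "maps_pos_cone f" and mc: "mult_convex f" and tk: "typeK_order_preserving f"
  shows "graph_arc f i i"
proof -
  define H where "H = (\<lambda>s. ln (f (vexp (s *\<^sub>R axis i 1)) $ i))"
  have "convex_on UNIV H"
    using convex_on_line[of "\<lambda>y. ln (f (vexp y) $ i)" 0] mc by (simp add: H_def mult_convex_def)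
  define x y where "x = vexp (0 *\<^sub>R axis i (1::real))" and "y = vexp (1 *\<^sub>R axis i (1::real))"
  have "vle x y" by (auto simp: x_def y_def vle_def vexp_def axis_def)
  then obtain \<epsilon> where "\<epsilon> > 0" and "vle (\<epsilon> *\<^sub>R (y - x)) (f y - f x)"
    using tk vexp_in_pos_cone unfolding typeK_order_preserving_def x_def y_def by blast
  hence "\<epsilon> * (y $ i - x $ i) \<le> f y $ i - f x $ i" by (simp add: vle_def)
  moreover have "0 < \<epsilon> * (y $ i - x $ i)" using \<open>\<epsilon> > 0\<close> by (simp add: x_def y_def vexp_def)
  ultimately have "f x $ i < f y $ i" by linarith
  hence "H 0 < H 1"
    using maps_pos_cone_component_pos[OF maps vexp_in_pos_cone] by (simp add: H_def x_def y_def)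
  with \<open>convex_on UNIV H\<close> have "filterlim H at_top at_top"
    by (intro convex_on_filterlim_at_top[of H 0 1]) auto
  hence "filterlim (\<lambda>s. exp (H s)) at_top at_top"
    using filterlim_compose[OF exp_at_top] by blast
  thus ?thesis
    using maps_pos_cone_component_pos[OF maps vexp_in_pos_cone] by (simp add: H_def graph_arc_def)
qed

lemma strict_mono_on_axis_line_if_graph_loop:
  assumes maps: "maps_pos_cone f" and op: "order_preserving f" and hom: "homogeneous f"
    and an: "analytic_map f" and loop: "graph_arc f i i" and x: "x \<in> pos_cone"
  shows "strict_mono_on {0..} (\<lambda>t. f (x + t *\<^sub>R axis i 1) $ i)"
proof (rule strict_mono_on_if_powser_expansions)
  show "mono_on {0..} (\<lambda>t. f (x + t *\<^sub>R axis i 1) $ i)"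
  proof (rule mono_onI)
    fix s t :: real assume "s \<in> {0..}" "t \<in> {0..}" "s \<le> t"
    hence "vle (x + s *\<^sub>R axis i 1) (x + t *\<^sub>R axis i 1)"
      by (auto simp: vle_def axis_def)
    thus "f (x + s *\<^sub>R axis i 1) $ i \<le> f (x + t *\<^sub>R axis i 1) $ i"
      using op pos_cone_add_axis[OF x] \<open>s \<in> {0..}\<close> \<open>t \<in> {0..}\<close>
      unfolding order_preserving_def vle_def by auto
  qed
  show "filterlim (\<lambda>t. f (x + t *\<^sub>R axis i 1) $ i) at_top at_top"
    by (rule filterlim_axis_line_if_graph_loop[OF maps op hom loop x])
next
  fix t :: real assume "t > 0"
  have "x + t *\<^sub>R axis i 1 \<in> pos_cone" using pos_cone_add_axis[OF x] \<open>t > 0\<close> by simp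
  moreover have "real_analytic_on (\<lambda>x. f x $ i) pos_cone" using an by (simp add: analytic_map_def)
  ultimately show "\<exists>\<rho>>0. \<exists>c. \<forall>r. \<bar>r\<bar> < \<rho> \<longrightarrow> (\<lambda>k. c k * r ^ k) sums f (x + (t + r) *\<^sub>R axis i 1) $ i"
    using real_analytic_on_axis_powser[of "\<lambda>x. f x $ i" pos_cone "x + t *\<^sub>R axis i 1" i]
    by (simp add: scaleR_add_left add.assoc)
qed

lemma component_less_if_graph_loop:
  assumes maps: "maps_pos_cone f" and op: "order_preserving f" and hom: "homogeneous f"
    and an: "analytic_map f" and loop: "graph_arc f i i"
    and x: "x \<in> pos_cone" and y: "y \<in> pos_cone" and "vle x y" and "x $ i < y $ i"
  shows "f x $ i < f y $ i"
proof -
  define z where "z = x + (y $ i - x $ i) *\<^sub>R axis i 1"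
  have "f x $ i < f z $ i"
    using strict_mono_onD[OF strict_mono_on_axis_line_if_graph_loop[OF maps op hom an loop x], of 0]
      \<open>x $ i < y $ i\<close> by (simp add: z_def)
  also have "f z $ i \<le> f y $ i"
  proof -
    have "vle z y" using \<open>vle x y\<close> by (simp add: z_def vle_def axis_def)
    moreover have "z \<in> pos_cone" using pos_cone_add_axis[OF x] \<open>x $ i < y $ i\<close> by (simp add: z_def)
    ultimately show ?thesis using op y unfolding order_preserving_def vle_def by blast
  qed
  finally show ?thesis .
qed

lemma typeK_if_component_less:
  fixes f :: "real ^ 'n \<Rightarrow> real ^ 'n"
  assumes op: "order_preserving f"
    and less: "\<And>x y i. x \<in> pos_cone \<Longrightarrow> y \<in> pos_cone \<Longrightarrow> vle x y \<Longrightarrow> x $ i < y $ i \<Longrightarrow> f x $ i < f y $ i"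
  shows "typeK_order_preserving f"
  unfolding typeK_order_preserving_def
proof (intro ballI impI)
  fix x y :: "real ^ 'n" assume x: "x \<in> pos_cone" and y: "y \<in> pos_cone" and "vle x y"
  define q where "q = (\<lambda>j. if x $ j < y $ j then (f y $ j - f x $ j) / (y $ j - x $ j) else 1)"
  define \<epsilon> where "\<epsilon> = Min (range q)"
  have "q j > 0" for j
    using less[OF x y \<open>vle x y\<close>, of j] by (simp add: q_def)
  hence "\<epsilon> > 0" by (simp add: \<epsilon>_def)
  moreover have "vle (\<epsilon> *\<^sub>R (y - x)) (f y - f x)"
    unfolding vle_def
  proof
    fix j
    have "\<epsilon> \<le> q j" by (simp add: \<epsilon>_def)
    have "f x $ j \<le> f y $ j"
      using op x y \<open>vle x y\<close> unfolding order_preserving_def vle_def by blast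
    show "(\<epsilon> *\<^sub>R (y - x)) $ j \<le> (f y - f x) $ j"
    proof (cases "x $ j < y $ j")
      case True
      thus ?thesis using \<open>\<epsilon> \<le> q j\<close> by (simp add: q_def le_divide_eq)
    next
      case False
      hence "x $ j = y $ j" using \<open>vle x y\<close> by (simp add: vle_def) (meson order.not_eq_order_implies_strict)
      thus ?thesis using \<open>f x $ j \<le> f y $ j\<close> by simp
    qed
  qed
  ultimately show "\<exists>\<epsilon>>0. vle (\<epsilon> *\<^sub>R (y - x)) (f y - f x)" by blast
qed

theorem mainTheorem10:
  fixes f :: "real ^ 'n \<Rightarrow> real ^ 'n"
  assumes "maps_pos_cone f"
    and "order_preserving f"
    and "homogeneous f"
    and "mult_convex f"
    and "analytic_map f"
  shows "typeK_order_preserving f \<longleftrightarrow> (\<forall>i. graph_arc f i i)"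
proof
  assume "typeK_order_preserving f"
  thus "\<forall>i. graph_arc f i i" using graph_loop_if_typeK assms(1,4) by blast
next
  assume "\<forall>i. graph_arc f i i"
  thus "typeK_order_preserving f"
    using typeK_if_component_less component_less_if_graph_loop assms(1,2,3,5) by blast
qed

end
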